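(* Let $0<\gamma\le 1/2$, let $(x,z)$ be an optimal extreme point solution of LP-CVRP-MD with optimum value $\mathrm{opt}_{LP}$, run the sampling procedure described in the context, let $U$ be the set of clients lying on no sampled branching, and let $F$ be a minimum-cost spanning forest of the complete graph on $C\cup R$ (edge costs $c$) in which each connected component contains exactly one vertex of $R\cup(C\setminus U)$. Then $\mathbb E[c(F)]\le e^{-\gamma}\,\mathrm{opt}_{LP}$.
   Context: Problem: nonempty disjoint finite sets $C$ (clients) and $R$ (depots), $V = C\cup R$, a metric $c$ on $V$, integer capacity $k \ge 3$; $c(v,R):=\min_{r\in R}c(v,r)>0$ for every client $v$. Work in the complete bidirected graph on $V$ (directed edges $(a,b)$ of cost $c(a,b)$); for a vector $y$ on directed edges and $S\subseteq V$, $y(\delta^{in}(S))$, $y(\delta^{out}(S))$ are sums over edges entering/leaving $S$. LP-CVRP-MD has variables $x^r_{v,e}\ge 0$ ($r\in R$, $v\in C$, $e$ a directed edge) and $z^r_{v,u}\ge0$ ($r\in R$, $v\in C$, $u\in V$), objective: minimize $\sum_{r,v,e} c(e)x^r_{v,e}$, constraints: (1) $x^r_v(\delta^{out}(u))$ is $2z^r_{v,v}$ if $u=r$, $0$ if $u=v$, $z^r_{v,u}$ otherwise; (2) $x^r_v(\delta^{in}(u))$ is $0$ if $u=r$, $2z^r_{v,v}$ if $u=v$, $z^r_{v,u}$ otherwise (for all $r\in R,v\in C,u\in V$); (3) $x^r_v(\delta^{in}(S))\ge z^r_{v,u}$ whenever $u\in S\subseteq V\setminus\{r\}$; (4) $\sum_{r\in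 R}\sum_{v\in C} z^r_{v,u}=1$ for all $u\in C$; (5) $z^r_{v,u}\le z^r_{v,v}$ for $u,v\in C$; (6) $z^r_{v,u}=0$ if $u,v\in C$ and $c(u,r)>c(v,r)$; (7) $\sum_{u\in C}z^r_{v,u}\le k z^r_{v,v}$. An $r$-branching is a tree rooted at $r$ oriented away from $r$. Sampling procedure: for each $r\in R$, $v\in C$, take $r$-branchings $B_1,B_2,\dots$ (finitely many) with weights $\mu_i\ge0$, $\sum_i\mu_i = 2\gamma z^r_{v,v}$, such that every directed edge $e$ lies in branchings of total weight at most $\gamma x^r_{v,e}$, $v$ lies on every $B_i$, and every client $u\neq v$ lies in branchings of total weight at least $\gamma z^r_{v,u}$ (such a decomposition exists by a theorem of Bang-Jensen, Frank and Jackson). Independently include each $B_i$ with probability $\mu_i$. $c(F)$ denotes the total edge cost of $F$. *)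

theory Defs
  imports Complex_Main
begin

definition dedges :: "'a set \<Rightarrow> ('a \<times> 'a) set" where
  "dedges V = {(a, b). a \<in> V \<and> b \<in> V \<and> a \<noteq> b}"

definition delta_in :: "'a set \<Rightarrow> 'a set \<Rightarrow> ('a \<times> 'a) set" where
  "delta_in V S = {(a, b) \<in> dedges V. a \<notin> S \<and> b \<in> S}"

definition delta_out :: "'a set \<Rightarrow> 'a set \<Rightarrow> ('a \<times> 'a) set" where
  "delta_out V S = {(a, b) \<in> dedges V. a \<in> S \<and> b \<notin> S}"

definition metric_on :: "'a set \<Rightarrow> ('a \<Rightarrow> 'a \<Rightarrow> real) \<Rightarrow> bool" where
  "metric_on V c \<longleftrightarrow>
     (\<forall>a\<in>V. c a a = 0) \<and>
     (\<forall>a\<in>V. \<forall>b\<in>V. c a b \<ge> 0 \<and> c a b = c b a) \<and>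
     (\<forall>a\<in>V. \<forall>b\<in>V. \<forall>d\<in>V. c a d \<le> c a b + c b d)"

text \<open>x r v e and z r v u; all variables outside the index domain are fixed to 0,
  so the feasible region is the polyhedron of the LP.\<close>
definition lp_feasible ::
  "'a set \<Rightarrow> 'a set \<Rightarrow> ('a \<Rightarrow> 'a \<Rightarrow> real) \<Rightarrow> nat \<Rightarrow>
   ('a \<Rightarrow> 'a \<Rightarrow> 'a \<times> 'a \<Rightarrow> real) \<Rightarrow> ('a \<Rightarrow> 'a \<Rightarrow> 'a \<Rightarrow> real) \<Rightarrow> bool" where
  "lp_feasible C R c k x z \<longleftrightarrow>
    (let V = C \<union> R in
     (\<forall>r v e. x r v e \<noteq> 0 \<longrightarrow> r \<in> R \<and> v \<in> C \<and> e \<in> dedges V) \<and>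
     (\<forall>r v u. z r v u \<noteq> 0 \<longrightarrow> r \<in> R \<and> v \<in> C \<and> u \<in> V) \<and>
     (\<forall>r v e. x r v e \<ge> 0) \<and>
     (\<forall>r v u. z r v u \<ge> 0) \<and>
     \<comment> \<open>(1)\<close>
     (\<forall>r\<in>R. \<forall>v\<in>C. \<forall>u\<in>V.
        (\<Sum>e\<in>delta_out V {u}. x r v e) =
          (if u = r then 2 * z r v v else if u = v then 0 else z r v u)) \<and>
     \<comment> \<open>(2)\<close>
     (\<forall>r\<in>R. \<forall>v\<in>C. \<forall>u\<in>V.
        (\<Sum>e\<in>delta_in V {u}. x r v e) =
          (if u = r then 0 else if u = v then 2 * z r v v else z r v u)) \<and>
     \<comment> \<open>(3)\<close>
     (\<forall>r\<in>R. \<forall>v\<in>C. \<forall>S u. S \<subseteq> V - {r} \<and> u \<in> S \<longrightarrow>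
        (\<Sum>e\<in>delta_in V S. x r v e) \<ge> z r v u) \<and>
     \<comment> \<open>(4)\<close>
     (\<forall>u\<in>C. (\<Sum>r\<in>R. \<Sum>v\<in>C. z r v u) = 1) \<and>
     \<comment> \<open>(5)\<close>
     (\<forall>r\<in>R. \<forall>v\<in>C. \<forall>u\<in>C. z r v u \<le> z r v v) \<and>
     \<comment> \<open>(6)\<close>
     (\<forall>r\<in>R. \<forall>v\<in>C. \<forall>u\<in>C. c u r > c v r \<longrightarrow> z r v u = 0) \<and>
     \<comment> \<open>(7)\<close>
     (\<forall>r\<in>R. \<forall>v\<in>C. (\<Sum>u\<in>C. z r v u) \<le> real k * z r v v))"

definition lp_obj ::
  "'a set \<Rightarrow> 'a set \<Rightarrow> ('a \<Rightarrow> 'a \<Rightarrow> real) \<Rightarrow> ('a \<Rightarrow> 'a \<Rightarrow> 'a \<times> 'a \<Rightarrow> real) \<Rightarrow> real" where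
  "lp_obj C R c x =
     (\<Sum>r\<in>R. \<Sum>v\<in>C. \<Sum>e\<in>dedges (C \<union> R). c (fst e) (snd e) * x r v e)"

definition lp_optimal where
  "lp_optimal C R c k x z \<longleftrightarrow> lp_feasible C R c k x z \<and>
     (\<forall>x' z'. lp_feasible C R c k x' z' \<longrightarrow> lp_obj C R c x \<le> lp_obj C R c x')"

definition lp_extreme where
  "lp_extreme C R c k x z \<longleftrightarrow> lp_feasible C R c k x z \<and>
     (\<forall>x1 z1 x2 z2 (t::real).
        lp_feasible C R c k x1 z1 \<and> lp_feasible C R c k x2 z2 \<and> 0 < t \<and> t < 1 \<and>
        x = (\<lambda>r v e. t * x1 r v e + (1 - t) * x2 r v e) \<and>
        z = (\<lambda>r v u. t * z1 r v u + (1 - t) * z2 r v u)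
        \<longrightarrow> x1 = x2 \<and> z1 = z2)"

definition bverts :: "'a \<Rightarrow> ('a \<times> 'a) set \<Rightarrow> 'a set" where
  "bverts r B = insert r (fst ` B \<union> snd ` B)"

text \<open>An r-branching in the complete bidirected graph on V: a tree rooted at r
  oriented away from r (root has in-degree 0, every other vertex in-degree 1,
  every vertex reachable from r).\<close>
definition is_branching :: "'a set \<Rightarrow> 'a \<Rightarrow> ('a \<times> 'a) set \<Rightarrow> bool" where
  "is_branching V r B \<longleftrightarrow> r \<in> V \<and> B \<subseteq> dedges V \<and>
     (\<forall>a. (a, r) \<notin> B) \<and>
     (\<forall>a1 a2 b. (a1, b) \<in> B \<and> (a2, b) \<in> B \<longrightarrow> a1 = a2) \<and>
     (\<forall>w\<in>bverts r B. (r, w) \<in> B\<^sup>*)"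

definition uedges :: "'a set \<Rightarrow> 'a set set" where
  "uedges V = {{a, b} | a b. a \<in> V \<and> b \<in> V \<and> a \<noteq> b}"

definition uadj :: "'a set set \<Rightarrow> ('a \<times> 'a) set" where
  "uadj F = {(a, b). {a, b} \<in> F}"

definition has_cycle :: "'a set set \<Rightarrow> bool" where
  "has_cycle F \<longleftrightarrow> (\<exists>vs. length vs \<ge> 3 \<and> distinct vs \<and>
      (\<forall>i < length vs. {vs ! i, vs ! ((i + 1) mod length vs)} \<in> F))"

definition is_forest :: "'a set \<Rightarrow> 'a set set \<Rightarrow> bool" where
  "is_forest V F \<longleftrightarrow> F \<subseteq> uedges V \<and> \<not> has_cycle F"

definition ucost :: "('a \<Rightarrow> 'a \<Rightarrow> real) \<Rightarrow> 'a set \<Rightarrow> real" where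
  "ucost c e = (SOME w. \<exists>a b. e = {a, b} \<and> w = c a b)"

definition forest_cost :: "('a \<Rightarrow> 'a \<Rightarrow> real) \<Rightarrow> 'a set set \<Rightarrow> real" where
  "forest_cost c F = (\<Sum>e\<in>F. ucost c e)"

definition terminal_forest :: "'a set \<Rightarrow> 'a set \<Rightarrow> 'a set set \<Rightarrow> bool" where
  "terminal_forest V T F \<longleftrightarrow> is_forest V F \<and>
     (\<forall>w\<in>V. \<exists>!t. t \<in> T \<and> (w, t) \<in> (uadj F)\<^sup>*)"

definition min_tforest_cost :: "'a set \<Rightarrow> 'a set \<Rightarrow> ('a \<Rightarrow> 'a \<Rightarrow> real) \<Rightarrow> real" where
  "min_tforest_cost V T c = Min (forest_cost c ` {F. terminal_forest V T F})"

definition unserved :: "'a set \<Rightarrow> ('i \<Rightarrow> 'a) \<Rightarrow> ('i \<Rightarrow> ('a \<times> 'a) set) \<Rightarrow> 'i set \<Rightarrow> 'a set" where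
  "unserved C rho B J = {u \<in> C. \<forall>i\<in>J. u \<notin> bverts (rho i) (B i)}"

text \<open>Expectation of the minimum forest cost when each index i in I is sampled
  independently with probability mu i.\<close>
definition expected_forest_cost ::
  "'a set \<Rightarrow> 'a set \<Rightarrow> ('a \<Rightarrow> 'a \<Rightarrow> real) \<Rightarrow> 'i set \<Rightarrow> ('i \<Rightarrow> 'a) \<Rightarrow>
   ('i \<Rightarrow> ('a \<times> 'a) set) \<Rightarrow> ('i \<Rightarrow> real) \<Rightarrow> real" where
  "expected_forest_cost C R c I rho B mu =
     (\<Sum>J\<in>Pow I. ((\<Prod>i\<in>J. mu i) * (\<Prod>i\<in>I - J. 1 - mu i)) *
        min_tforest_cost (C \<union> R) (R \<union> (C - unserved C rho B J)) c)"

end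

theory Submission
  imports Defs
begin

text \<open>Fix a sample and let U be its set of unserved clients. By constraints (3) and (4), the
  total LP flow y (the sum of all x r v) sends at least one unit into every nonempty set of
  unserved clients. Such a fractional cut cover pays for a parent map attaching every vertex of U
  to a terminal in R \<union> (C - U), whose edges cost at most the y-cost of the edges entering U.
  This is the integrality of the directed cut relaxation for minimum arborescences, proved by
  the primal-dual contraction argument: lower all weights at U by the cheapest weight entering U,
  contract a zero-weight edge, and lift the parent map back.

  Every client lies on sampled branchings of total weight at least \<gamma>, so it stays unserved with
  probability at most the product of the 1 - mu i, hence at most exp (- \<gamma>). By linearity of
  expectation the expected forest cost is at most exp (- \<gamma>) times the y-cost of all edges, which
  is the LP objective.\<close>

definition parent_map :: "'a set \<Rightarrow> 'a set \<Rightarrow> ('a \<Rightarrow> 'a) \<Rightarrow> ('a \<Rightarrow> nat) \<Rightarrow> bool" where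
  "parent_map V T p h \<longleftrightarrow> (\<forall>u\<in>V - T. p u \<in> V \<and> h (p u) < h u)"

definition parent_edges :: "'a set \<Rightarrow> 'a set \<Rightarrow> ('a \<Rightarrow> 'a) \<Rightarrow> 'a set set" where
  "parent_edges V T p = (\<lambda>u. {u, p u}) ` (V - T)"

lemma parent_edge_lower_end:
  assumes "parent_map V T p h" and "{a, b} \<in> parent_edges V T p" and "a \<noteq> b" and "h a \<le> h b"
  shows "a = p b"
proof -
  obtain u where u: "u \<in> V - T" "{a, b} = {u, p u}"
    using assms(2) unfolding parent_edges_def by blast
  then have "h (p u) < h u" using assms(1) unfolding parent_map_def by blast
  with u(2) assms(3,4) show ?thesis by (auto simp: doubleton_eq_iff)
qed

text \<open>On a cycle, the vertex of maximal height would have both of its cycle neighbours as parent.\<close>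
lemma parent_edges_acyclic:
  assumes "parent_map V T p h"
  shows "\<not> has_cycle (parent_edges V T p)"
proof
  assume "has_cycle (parent_edges V T p)"
  then obtain vs where vs: "length vs \<ge> 3" "distinct vs"
    and edge: "\<And>i. i < length vs \<Longrightarrow> {vs ! i, vs ! ((i + 1) mod length vs)} \<in> parent_edges V T p"
    unfolding has_cycle_def by blast
  define n where "n = length vs"
  have n: "n \<ge> 3" using vs(1) n_def by simp
  define M where "M = Max ((\<lambda>j. h (vs ! j)) ` {..<n})"
  have "M \<in> (\<lambda>j. h (vs ! j)) ` {..<n}" unfolding M_def using n by (intro Max_in) (auto simp: lessThan_empty_iff)
  then obtain i where i: "i < n" and hi: "h (vs ! i) = M" by auto
  have max: "h (vs ! j) \<le> h (vs ! i)" if "j < n" for j unfolding hi M_def using that by simp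
  define succ pred where "succ = (i + 1) mod n" and "pred = (i + n - 1) mod n"
  have succ_pred: "succ < n" "pred < n" "succ \<noteq> i" "pred \<noteq> i" "succ \<noteq> pred"
    using i n unfolding succ_def pred_def by (auto simp: mod_if)
  have "(pred + 1) mod n = i"
    using i n unfolding pred_def by (auto simp: mod_if)
  then have "{vs ! pred, vs ! i} \<in> parent_edges V T p" "{vs ! succ, vs ! i} \<in> parent_edges V T p"
    using edge[of pred] edge[of i] succ_pred i unfolding n_def succ_def by (auto simp: insert_commute)
  moreover have "vs ! pred \<noteq> vs ! i" "vs ! succ \<noteq> vs ! i" "vs ! succ \<noteq> vs ! pred"
    using succ_pred i vs(2) unfolding n_def by (auto simp: nth_eq_iff_index_eq)
  ultimately show False
    using parent_edge_lower_end[OF assms] max succ_pred by metis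
qed

definition parent_rel :: "'a set \<Rightarrow> 'a set \<Rightarrow> ('a \<Rightarrow> 'a) \<Rightarrow> ('a \<times> 'a) set" where
  "parent_rel V T p = {(u, p u) | u. u \<in> V - T}"

lemma parent_map_reaches_terminal:
  assumes "parent_map V T p h" and "w \<in> V"
  shows "\<exists>t\<in>T. (w, t) \<in> (parent_rel V T p)\<^sup>*"
  using assms(2)
proof (induction "h w" arbitrary: w rule: less_induct)
  case less
  show ?case
  proof (cases "w \<in> T")
    case False
    then have "p w \<in> V" "h (p w) < h w" using assms(1) less.prems unfolding parent_map_def by auto
    then obtain t where "t \<in> T" "(p w, t) \<in> (parent_rel V T p)\<^sup>*" using less.hyps by blast
    moreover have "(w, p w) \<in> parent_rel V T p" using False less.prems unfolding parent_rel_def by auto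
    ultimately show ?thesis by (meson converse_rtrancl_into_rtrancl)
  qed blast
qed

lemma parent_rel_step_same_terminal:
  assumes "u \<in> V - T" and "t \<in> T"
  shows "(u, t) \<in> (parent_rel V T p)\<^sup>* \<longleftrightarrow> (p u, t) \<in> (parent_rel V T p)\<^sup>*"
proof
  assume "(u, t) \<in> (parent_rel V T p)\<^sup>*"
  then show "(p u, t) \<in> (parent_rel V T p)\<^sup>*"
  proof (cases rule: converse_rtranclE)
    case base
    then show ?thesis using assms by auto
  next
    case (step d)
    then show ?thesis unfolding parent_rel_def by auto
  qed
next
  assume "(p u, t) \<in> (parent_rel V T p)\<^sup>*"
  moreover have "(u, p u) \<in> parent_rel V T p" using assms(1) unfolding parent_rel_def by auto
  ultimately show "(u, t) \<in> (parent_rel V T p)\<^sup>*" by (rule converse_rtrancl_into_rtrancl[rotated])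
qed

lemma parent_edges_path_same_terminal:
  assumes "(a, b) \<in> (uadj (parent_edges V T p))\<^sup>*" and "t \<in> T"
  shows "(a, t) \<in> (parent_rel V T p)\<^sup>* \<longleftrightarrow> (b, t) \<in> (parent_rel V T p)\<^sup>*"
  using assms(1)
proof (induction rule: rtrancl_induct)
  case (step b c)
  obtain u where u: "u \<in> V - T" "{b, c} = {u, p u}"
    using step.hyps(2) unfolding uadj_def parent_edges_def by auto
  then have "(b, t) \<in> (parent_rel V T p)\<^sup>* \<longleftrightarrow> (c, t) \<in> (parent_rel V T p)\<^sup>*"
    using parent_rel_step_same_terminal[OF u(1) assms(2)] by (auto simp: doubleton_eq_iff)
  with step.IH show ?case by blast
qed simp

lemma parent_edges_terminal_forest:
  assumes "T \<subseteq> V" and "parent_map V T p h"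
  shows "terminal_forest V T (parent_edges V T p)"
proof -
  let ?P = "parent_rel V T p" and ?E = "uadj (parent_edges V T p)"
  have "parent_edges V T p \<subseteq> uedges V"
    using assms(2) unfolding parent_edges_def uedges_def parent_map_def by fastforce
  moreover have "\<exists>!t. t \<in> T \<and> (w, t) \<in> ?E\<^sup>*" if w: "w \<in> V" for w
  proof -
    obtain t where t: "t \<in> T" "(w, t) \<in> ?P\<^sup>*"
      using parent_map_reaches_terminal[OF assms(2) w] by blast
    have "?P \<subseteq> ?E" unfolding parent_rel_def uadj_def parent_edges_def by auto
    then have "(w, t) \<in> ?E\<^sup>*" using t(2) rtrancl_mono by blast
    moreover have "t' = t" if t': "t' \<in> T" "(w, t') \<in> ?E\<^sup>*" for t'
    proof -
      have "(w, t') \<in> ?P\<^sup>*"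
        using parent_edges_path_same_terminal[OF t'(2) t'(1)] by simp
      moreover have "single_valued ?P" unfolding parent_rel_def single_valued_def by auto
      ultimately have "(t, t') \<in> ?P\<^sup>* \<or> (t', t) \<in> ?P\<^sup>*"
        using single_valued_confluent t(2) by metis
      moreover have "t \<notin> Domain ?P" "t' \<notin> Domain ?P" using t'(1) t(1) unfolding parent_rel_def by auto
      ultimately show ?thesis by (metis DomainI converse_rtranclE)
    qed
    ultimately show ?thesis using t(1) by blast
  qed
  ultimately show ?thesis
    unfolding terminal_forest_def is_forest_def using parent_edges_acyclic[OF assms(2)] by blast
qed

lemma ucost_doubleton:
  assumes "c a b = c b a"
  shows "ucost c {a, b} = c a b"
  unfolding ucost_def
proof (rule someI2[of _ "c a b"])
  fix w assume "\<exists>a' b'. {a, b} = {a', b'} \<and> w = c a' b'"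
  then show "w = c a b" using assms by (auto simp: doubleton_eq_iff)
qed blast

lemma finite_terminal_forests:
  assumes "finite V"
  shows "finite {F. terminal_forest V T F}"
proof -
  have "uedges V \<subseteq> Pow V" unfolding uedges_def by auto
  then have "finite (Pow (uedges V))" using assms finite_subset by blast
  moreover have "{F. terminal_forest V T F} \<subseteq> Pow (uedges V)"
    unfolding terminal_forest_def is_forest_def by auto
  ultimately show ?thesis by (rule finite_subset[rotated])
qed

lemma min_tforest_cost_le_parent_cost:
  assumes "finite V" and "T \<subseteq> V" and "parent_map V T p h"
    and sym: "\<forall>s\<in>V. \<forall>t\<in>V. c s t = c t s"
  shows "min_tforest_cost V T c \<le> (\<Sum>u\<in>V - T. c u (p u))"
proof -
  have parent: "p u \<in> V" "h (p u) < h u" if "u \<in> V - T" for u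
    using assms(3) that unfolding parent_map_def by auto
  have "inj_on (\<lambda>u. {u, p u}) (V - T)"
  proof (rule inj_onI)
    fix u v assume "u \<in> V - T" "v \<in> V - T" "{u, p u} = {v, p v}"
    then show "u = v" using parent by (metis doubleton_eq_iff less_asym')
  qed
  then have "forest_cost c (parent_edges V T p) = (\<Sum>u\<in>V - T. ucost c {u, p u})"
    unfolding forest_cost_def parent_edges_def by (simp add: sum.reindex)
  also have "\<dots> = (\<Sum>u\<in>V - T. c u (p u))"
    using sym parent by (intro sum.cong refl ucost_doubleton) auto
  finally have "forest_cost c (parent_edges V T p) = (\<Sum>u\<in>V - T. c u (p u))" .
  moreover have "min_tforest_cost V T c \<le> forest_cost c (parent_edges V T p)"
    unfolding min_tforest_cost_def
    using finite_terminal_forests[OF assms(1)] parent_edges_terminal_forest[OF assms(2,3)]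
    by (intro Min_le) auto
  ultimately show ?thesis by simp
qed

definition in_cost :: "'a set \<Rightarrow> 'a set \<Rightarrow> ('a \<Rightarrow> 'a \<Rightarrow> real) \<Rightarrow> ('a \<times> 'a \<Rightarrow> real) \<Rightarrow> real" where
  "in_cost V U w y = (\<Sum>t\<in>U. \<Sum>s\<in>V - {t}. w s t * y (s, t))"

definition covers_cuts :: "'a set \<Rightarrow> 'a set \<Rightarrow> ('a \<times> 'a \<Rightarrow> real) \<Rightarrow> bool" where
  "covers_cuts V T y \<longleftrightarrow> (\<forall>S. S \<subseteq> V - T \<longrightarrow> S \<noteq> {} \<longrightarrow> 1 \<le> (\<Sum>t\<in>S. \<Sum>s\<in>V - S. y (s, t)))"

lemma in_cost_eq_sum_indicator:
  assumes "finite V" and "U \<subseteq> V"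
  shows "in_cost V U w y = (\<Sum>t\<in>V. in_cost V {t} w y * of_bool (t \<in> U))"
proof -
  have "(\<Sum>t\<in>V. in_cost V {t} w y * of_bool (t \<in> U)) = (\<Sum>t\<in>V. if t \<in> U then in_cost V {t} w y else 0)"
    by (intro sum.cong) auto
  also have "\<dots> = (\<Sum>t\<in>V \<inter> U. in_cost V {t} w y)"
    using assms(1) by (rule sum.inter_restrict[symmetric])
  also have "V \<inter> U = U" using assms(2) by blast
  finally show ?thesis unfolding in_cost_def by simp
qed

lemma in_cost_nonneg:
  assumes "\<forall>s\<in>V. \<forall>t\<in>V. s \<noteq> t \<longrightarrow> 0 \<le> w s t" and "\<forall>e. 0 \<le> y e" and "U \<subseteq> V"
  shows "0 \<le> in_cost V U w y"
  unfolding in_cost_def using assms by (intro sum_nonneg mult_nonneg_nonneg) auto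

text \<open>Contraction of the vertex b into a: flow on edges at b is moved to the corresponding
  edges at a, and the merged vertex gets the cheaper of the two weights.\<close>
definition contract_flow :: "'a \<Rightarrow> 'a \<Rightarrow> ('a \<times> 'a \<Rightarrow> real) \<Rightarrow> 'a \<times> 'a \<Rightarrow> real" where
  "contract_flow a b y = (\<lambda>(s, t). y (s, t) + (if s = a then y (b, t) else 0) + (if t = a then y (s, b) else 0))"

definition contract_weight :: "'a \<Rightarrow> 'a \<Rightarrow> ('a \<Rightarrow> 'a \<Rightarrow> real) \<Rightarrow> 'a \<Rightarrow> 'a \<Rightarrow> real" where
  "contract_weight a b w =
     (\<lambda>s t. if s = a then min (w a t) (w b t) else if t = a then min (w s a) (w s b) else w s t)"

text \<open>A cut S of the contracted graph is, in the original graph, the cut S itself or, if it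
  contains the merged vertex a, the cut S \<union> {b}.\<close>
lemma covers_cuts_contract:
  assumes "finite V" and b: "b \<in> V - T" and a: "a \<in> V" "a \<noteq> b" and cover: "covers_cuts V T y"
  shows "covers_cuts (V - {b}) T (contract_flow a b y)"
  unfolding covers_cuts_def
proof (intro allI impI)
  fix S assume S: "S \<subseteq> V - {b} - T" "S \<noteq> {}"
  let ?y = "contract_flow a b y"
  have inflow: "(\<Sum>s\<in>V - {b} - S. ?y (s, t)) = (\<Sum>s\<in>V - {b} - S. y (s, t))
      + (if a \<in> V - {b} - S then y (b, t) else 0) + (if t = a then (\<Sum>s\<in>V - {b} - S. y (s, b)) else 0)"
    for t
    using assms(1) by (simp add: contract_flow_def sum.distrib sum.delta)
  show "1 \<le> (\<Sum>t\<in>S. \<Sum>s\<in>V - {b} - S. ?y (s, t))"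
  proof (cases "a \<in> S")
    case False
    have "(\<Sum>s\<in>V - {b} - S. ?y (s, t)) = (\<Sum>s\<in>V - S. y (s, t))" if "t \<in> S" for t
    proof -
      have "V - S = insert b (V - {b} - S)" "b \<notin> V - {b} - S" using b S by auto
      then have "(\<Sum>s\<in>V - S. y (s, t)) = y (b, t) + (\<Sum>s\<in>V - {b} - S. y (s, t))"
        using assms(1) by (metis finite_Diff sum.insert)
      then show ?thesis using inflow[of t] that False a by auto
    qed
    then have "(\<Sum>t\<in>S. \<Sum>s\<in>V - {b} - S. ?y (s, t)) = (\<Sum>t\<in>S. \<Sum>s\<in>V - S. y (s, t))" by simp
    with cover[unfolded covers_cuts_def, rule_format, of S] S show ?thesis by auto
  next
    case True
    have "finite S" using S assms(1) finite_subset by blast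
    have "b \<notin> S" using S by blast
    have "(\<Sum>t\<in>S. \<Sum>s\<in>V - {b} - S. ?y (s, t))
        = (\<Sum>t\<in>S. (\<Sum>s\<in>V - {b} - S. y (s, t)) + (if t = a then (\<Sum>s\<in>V - {b} - S. y (s, b)) else 0))"
      using inflow True by (intro sum.cong) auto
    also have "\<dots> = (\<Sum>t\<in>S. \<Sum>s\<in>V - {b} - S. y (s, t)) + (\<Sum>s\<in>V - {b} - S. y (s, b))"
      using True \<open>finite S\<close> by (simp add: sum.distrib sum.delta)
    also have "\<dots> = (\<Sum>t\<in>insert b S. \<Sum>s\<in>V - insert b S. y (s, t))"
      using \<open>finite S\<close> \<open>b \<notin> S\<close> by (simp add: set_diff_eq Diff_insert add.commute)
    finally have "(\<Sum>t\<in>S. \<Sum>s\<in>V - {b} - S. ?y (s, t)) = (\<Sum>t\<in>insert b S. \<Sum>s\<in>V - insert b S. y (s, t))" .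
    moreover have "insert b S \<subseteq> V - T" using S b by auto
    ultimately show ?thesis using cover[unfolded covers_cuts_def, rule_format, of "insert b S"] by simp
  qed
qed

lemma contract_term_le:
  assumes "\<forall>e. 0 \<le> y e" and "s \<noteq> t"
  shows "contract_weight a b w s t * contract_flow a b y (s, t)
    \<le> w s t * y (s, t) + (if s = a then w b t * y (b, t) else 0) + (if t = a then w s b * y (s, b) else 0)"
proof -
  have "contract_weight a b w s t * y (s, t) \<le> w s t * y (s, t)"
    using assms by (intro mult_right_mono) (auto simp: contract_weight_def)
  moreover have "contract_weight a b w s t * (if s = a then y (b, t) else 0) \<le> (if s = a then w b t * y (b, t) else 0)"
    using assms by (auto simp: contract_weight_def intro!: mult_right_mono)
  moreover have "contract_weight a b w s t * (if t = a then y (s, b) else 0) \<le> (if t = a then w s b * y (s, b) else 0)"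
    using assms by (auto simp: contract_weight_def intro!: mult_right_mono)
  moreover have flow: "contract_flow a b y (s, t) = y (s, t) + (if s = a then y (b, t) else 0) + (if t = a then y (s, b) else 0)"
    by (simp add: contract_flow_def)
  ultimately show ?thesis unfolding flow distrib_left by linarith
qed

lemma contract_in_flow_cost_le:
  assumes "finite V" and b: "b \<in> V" and t: "t \<in> V - {b}"
    and y: "\<forall>e. 0 \<le> y e" and w: "\<forall>s\<in>V. \<forall>t\<in>V. s \<noteq> t \<longrightarrow> 0 \<le> w s t"
  shows "(\<Sum>s\<in>V - {b} - {t}. contract_weight a b w s t * contract_flow a b y (s, t))
    \<le> (\<Sum>s\<in>V - {t}. w s t * y (s, t)) + (if t = a then (\<Sum>s\<in>V - {b} - {a}. w s b * y (s, b)) else 0)"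
proof -
  have "(\<Sum>s\<in>V - {b} - {t}. contract_weight a b w s t * contract_flow a b y (s, t))
      \<le> (\<Sum>s\<in>V - {b} - {t}. w s t * y (s, t) + (if s = a then w b t * y (b, t) else 0)
           + (if t = a then w s b * y (s, b) else 0))"
    using contract_term_le[OF y] by (intro sum_mono) auto
  also have "\<dots> = (\<Sum>s\<in>V - {b} - {t}. w s t * y (s, t)) + (if a \<in> V - {b} - {t} then w b t * y (b, t) else 0)
      + (if t = a then (\<Sum>s\<in>V - {b} - {t}. w s b * y (s, b)) else 0)"
    using assms(1) by (simp add: sum.distrib sum.delta)
  also have "\<dots> \<le> (\<Sum>s\<in>V - {b} - {t}. w s t * y (s, t)) + w b t * y (b, t)
      + (if t = a then (\<Sum>s\<in>V - {b} - {a}. w s b * y (s, b)) else 0)"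
  proof -
    have "0 \<le> w b t * y (b, t)" using w y b t by auto
    then show ?thesis by (cases "t = a") auto
  qed
  also have "(\<Sum>s\<in>V - {b} - {t}. w s t * y (s, t)) + w b t * y (b, t) = (\<Sum>s\<in>V - {t}. w s t * y (s, t))"
  proof -
    have "(\<Sum>s\<in>V - {t}. w s t * y (s, t)) = w b t * y (b, t) + (\<Sum>s\<in>V - {t} - {b}. w s t * y (s, t))"
      using assms(1) b t by (intro sum.remove) auto
    moreover have "V - {t} - {b} = V - {b} - {t}" by blast
    ultimately show ?thesis by simp
  qed
  finally show ?thesis by simp
qed

lemma in_cost_contract_le:
  assumes "finite V" and b: "b \<in> V - T" and a: "a \<in> V" "a \<noteq> b"
    and y: "\<forall>e. 0 \<le> y e" and w: "\<forall>s\<in>V. \<forall>t\<in>V. s \<noteq> t \<longrightarrow> 0 \<le> w s t"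
  shows "in_cost (V - {b}) (V - T - {b}) (contract_weight a b w) (contract_flow a b y) \<le> in_cost V (V - T) w y"
proof -
  let ?U = "V - T - {b}"
  have "in_cost (V - {b}) ?U (contract_weight a b w) (contract_flow a b y)
      \<le> (\<Sum>t\<in>?U. (\<Sum>s\<in>V - {t}. w s t * y (s, t)) + (if t = a then (\<Sum>s\<in>V - {b} - {a}. w s b * y (s, b)) else 0))"
    unfolding in_cost_def using contract_in_flow_cost_le[OF assms(1) _ _ y w] b by (intro sum_mono) auto
  also have "\<dots> = (\<Sum>t\<in>?U. \<Sum>s\<in>V - {t}. w s t * y (s, t)) + (if a \<in> ?U then (\<Sum>s\<in>V - {b} - {a}. w s b * y (s, b)) else 0)"
    using assms(1) by (simp add: sum.distrib sum.delta)
  also have "\<dots> \<le> (\<Sum>t\<in>?U. \<Sum>s\<in>V - {t}. w s t * y (s, t)) + (\<Sum>s\<in>V - {b}. w s b * y (s, b))"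
  proof -
    have "(\<Sum>s\<in>V - {b} - {a}. w s b * y (s, b)) \<le> (\<Sum>s\<in>V - {b}. w s b * y (s, b))"
      using assms(1) w y b by (intro sum_mono2) auto
    moreover have "0 \<le> (\<Sum>s\<in>V - {b}. w s b * y (s, b))"
      using w y b by (intro sum_nonneg) auto
    ultimately show ?thesis by auto
  qed
  also have "\<dots> = in_cost V (V - T) w y"
  proof -
    have "in_cost V (V - T) w y = (\<Sum>s\<in>V - {b}. w s b * y (s, b)) + (\<Sum>t\<in>?U. \<Sum>s\<in>V - {t}. w s t * y (s, t))"
      unfolding in_cost_def using assms(1) b by (intro sum.remove) auto
    then show ?thesis by linarith
  qed
  finally show ?thesis .
qed

text \<open>Lifting a parent map of the contracted graph: the merged vertex's parent is taken by
  whichever of a, b is cheaper to attach there, the other one hangs below it at zero cost,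
  and children of the merged vertex choose the cheaper of a and b. Doubling the heights
  leaves room for the extra level.\<close>
definition lift_parent :: "'a set \<Rightarrow> 'a \<Rightarrow> 'a \<Rightarrow> ('a \<Rightarrow> 'a \<Rightarrow> real) \<Rightarrow> ('a \<Rightarrow> 'a) \<Rightarrow> 'a \<Rightarrow> 'a" where
  "lift_parent T a b w p u =
     (if u = b then (if a \<in> T \<or> w a (p a) \<le> w b (p a) then a else p a)
      else if u = a then (if w a (p a) \<le> w b (p a) then p a else b)
      else if p u = a then (if w u a \<le> w u b then a else b)
      else p u)"

definition lift_height ::
  "'a set \<Rightarrow> 'a \<Rightarrow> 'a \<Rightarrow> ('a \<Rightarrow> 'a \<Rightarrow> real) \<Rightarrow> ('a \<Rightarrow> 'a) \<Rightarrow> ('a \<Rightarrow> nat) \<Rightarrow> 'a \<Rightarrow> nat" where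
  "lift_height T a b w p h u =
     (if u = a \<or> u = b
      then 2 * h a + (if (u = b) = (a \<in> T \<or> w a (p a) \<le> w b (p a)) then 1 else 0)
      else 2 * h u)"

lemma parent_map_lift:
  assumes b: "b \<in> V - T" and a: "a \<in> V" "a \<noteq> b" and parent: "parent_map (V - {b}) T p h"
  shows "parent_map V T (lift_parent T a b w p) (lift_height T a b w p h)"
  unfolding parent_map_def
proof
  fix u assume u: "u \<in> V - T"
  let ?p = "lift_parent T a b w p" and ?h = "lift_height T a b w p h"
  have p: "p v \<in> V - {b}" "h (p v) < h v" if "v \<in> V - {b} - T" for v
    using parent that unfolding parent_map_def by auto
  have h_other: "?h v = 2 * h v" if "v \<noteq> a" "v \<noteq> b" for v
    using that unfolding lift_height_def by auto
  have h_ab: "?h a \<le> 2 * h a + 1" "?h b \<le> 2 * h a + 1"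
    unfolding lift_height_def by auto
  consider "u = b" "a \<in> T" | "u = b" "a \<notin> T" | "u = a" | "u \<noteq> a" "u \<noteq> b" "p u = a" | "u \<noteq> a" "u \<noteq> b" "p u \<noteq> a"
    by blast
  then show "?p u \<in> V \<and> ?h (?p u) < ?h u"
  proof cases
    case 1
    then show ?thesis using a b unfolding lift_parent_def lift_height_def by auto
  next
    case 2
    then have "p a \<in> V - {b}" "h (p a) < h a" using p[of a] a by auto
    then show ?thesis using 2 a h_other[of "p a"] unfolding lift_parent_def lift_height_def by auto
  next
    case 3
    then have "a \<notin> T" using u by blast
    then have "p a \<in> V - {b}" "h (p a) < h a" using p[of a] a by auto
    then show ?thesis using 3 \<open>a \<notin> T\<close> a b h_other[of "p a"] unfolding lift_parent_def lift_height_def by auto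
  next
    case 4
    then have "h a < h u" using p[of u] u by auto
    moreover have "?p u = a \<or> ?p u = b" using 4 unfolding lift_parent_def by auto
    ultimately show ?thesis using 4 a b h_ab h_other[of u] by auto
  next
    case 5
    then have "p u \<in> V - {b}" "h (p u) < h u" using p[of u] u by auto
    then show ?thesis using 5 h_other[of u] h_other[of "p u"] unfolding lift_parent_def by auto
  qed
qed

lemma lift_parent_cost:
  assumes "finite V" and b: "b \<in> V - T" and a: "a \<in> V" "a \<noteq> b"
    and zero: "w a b = 0" "w b a = 0" and parent: "parent_map (V - {b}) T p h"
  shows "(\<Sum>u\<in>V - T. w u (lift_parent T a b w p u)) = (\<Sum>u\<in>V - {b} - T. contract_weight a b w u (p u))"
proof -
  let ?p = "lift_parent T a b w p" and ?w = "contract_weight a b w"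
  have p: "p v \<in> V - {b}" "h (p v) < h v" if "v \<in> V - {b} - T" for v
    using parent that unfolding parent_map_def by auto
  have other: "w u (?p u) = ?w u (p u)" if "u \<in> V - T" "u \<noteq> a" "u \<noteq> b" for u
    using that p[of u] unfolding lift_parent_def contract_weight_def by (auto simp: min_def)
  show ?thesis
  proof (cases "a \<in> T")
    case True
    have "(\<Sum>u\<in>V - T. w u (?p u)) = w b (?p b) + (\<Sum>u\<in>V - T - {b}. w u (?p u))"
      using assms(1) b by (intro sum.remove) auto
    also have "w b (?p b) = 0" using True zero unfolding lift_parent_def by simp
    also have "V - T - {b} = V - {b} - T" by blast
    also have "(\<Sum>u\<in>V - {b} - T. w u (?p u)) = (\<Sum>u\<in>V - {b} - T. ?w u (p u))"
      using other True by (intro sum.cong) auto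
    finally show ?thesis by simp
  next
    case False
    define W where "W = V - T - {a, b}"
    have "finite W" using assms(1) W_def by auto
    have VT: "V - T = insert b (insert a W)" "b \<notin> insert a W" "a \<notin> W"
      using b a False W_def by auto
    have "p a \<in> V" "p a \<noteq> a" using p[of a] a False by auto
    then have "w b (?p b) + w a (?p a) = ?w a (p a)"
      using zero a False unfolding lift_parent_def contract_weight_def by (auto simp: min_def)
    moreover have "(\<Sum>u\<in>W. w u (?p u)) = (\<Sum>u\<in>W. ?w u (p u))"
      using other unfolding W_def by (intro sum.cong) auto
    moreover have "V - {b} - T = insert a W" using b a False W_def by auto
    ultimately show ?thesis using VT \<open>finite W\<close> by (simp add: add.assoc)
  qed
qed

definition lower_weights :: "'a set \<Rightarrow> real \<Rightarrow> ('a \<Rightarrow> 'a \<Rightarrow> real) \<Rightarrow> 'a \<Rightarrow> 'a \<Rightarrow> real" where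
  "lower_weights U lam w = (\<lambda>s t. if s \<in> U \<or> t \<in> U then w s t - lam else w s t)"

lemma lift_parent_cost_le_in_cost:
  assumes "finite V" and b: "b \<in> V - T" and a: "a \<in> V" "a \<noteq> b" and y: "\<forall>e. 0 \<le> y e"
    and w: "\<forall>s\<in>V. \<forall>t\<in>V. s \<noteq> t \<longrightarrow> w s t = w t s \<and> 0 \<le> w s t"
    and zero: "w a b = 0" "w b a = 0" and parent: "parent_map (V - {b}) T p h"
    and le: "(\<Sum>u\<in>V - {b} - T. contract_weight a b w u (p u))
      \<le> in_cost (V - {b}) (V - {b} - T) (contract_weight a b w) (contract_flow a b y)"
  shows "(\<Sum>u\<in>V - T. w u (lift_parent T a b w p u)) \<le> in_cost V (V - T) w y"
proof -
  have "in_cost (V - {b}) (V - T - {b}) (contract_weight a b w) (contract_flow a b y) \<le> in_cost V (V - T) w y"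
    by (rule in_cost_contract_le[OF assms(1) b a y]) (use w in blast)
  moreover have "V - {b} - T = V - T - {b}" by blast
  ultimately show ?thesis using le lift_parent_cost[OF assms(1) b a zero parent] by simp
qed

text \<open>Lowering the weights at non-terminals by lam lowers the cost of a parent map by exactly
  lam |V - T| and the cost of y by at least as much, since every singleton cut carries flow 1.\<close>
lemma parent_cost_le_in_cost_lower_weights:
  assumes "finite V" and "0 \<le> lam" and cover: "covers_cuts V T y"
    and le: "(\<Sum>u\<in>V - T. lower_weights (V - T) lam w u (p u)) \<le> in_cost V (V - T) (lower_weights (V - T) lam w) y"
  shows "(\<Sum>u\<in>V - T. w u (p u)) \<le> in_cost V (V - T) w y"
proof -
  let ?U = "V - T" and ?w = "lower_weights (V - T) lam w"
  have "(\<Sum>u\<in>?U. ?w u (p u)) = (\<Sum>u\<in>?U. w u (p u) - lam)"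
    unfolding lower_weights_def by (intro sum.cong) auto
  then have "(\<Sum>u\<in>?U. ?w u (p u)) = (\<Sum>u\<in>?U. w u (p u)) - lam * card ?U"
    by (simp add: sum_subtractf)
  moreover have "in_cost V ?U ?w y = (\<Sum>t\<in>?U. \<Sum>s\<in>V - {t}. w s t * y (s, t) - lam * y (s, t))"
    unfolding in_cost_def lower_weights_def by (intro sum.cong refl) (auto simp: left_diff_distrib)
  then have "in_cost V ?U ?w y = in_cost V ?U w y - lam * (\<Sum>t\<in>?U. \<Sum>s\<in>V - {t}. y (s, t))"
    unfolding in_cost_def by (simp add: sum_subtractf sum_distrib_left)
  moreover have "real (card ?U) \<le> (\<Sum>t\<in>?U. \<Sum>s\<in>V - {t}. y (s, t))"
  proof -
    have "1 \<le> (\<Sum>s\<in>V - {t}. y (s, t))" if "t \<in> ?U" for t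
      using cover[unfolded covers_cuts_def, rule_format, of "{t}"] that by simp
    then have "(\<Sum>t\<in>?U. 1) \<le> (\<Sum>t\<in>?U. \<Sum>s\<in>V - {t}. y (s, t))" by (rule sum_mono)
    then show ?thesis by simp
  qed
  then have "lam * card ?U \<le> lam * (\<Sum>t\<in>?U. \<Sum>s\<in>V - {t}. y (s, t))"
    using assms(2) by (rule mult_left_mono)
  ultimately show ?thesis using le by linarith
qed

lemma min_weight_edge_exists:
  fixes w :: "'a \<Rightarrow> 'a \<Rightarrow> real"
  assumes "finite V" and "t0 \<in> U" and "s0 \<in> V - U" and "U \<subseteq> V"
  obtains a b where "a \<in> V" "b \<in> U" "a \<noteq> b" "\<And>s t. s \<in> V \<Longrightarrow> t \<in> U \<Longrightarrow> s \<noteq> t \<Longrightarrow> w a b \<le> w s t"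
proof -
  let ?E = "{(s, t). s \<in> V \<and> t \<in> U \<and> s \<noteq> t}"
  have "finite ?E" using assms(1,4) by (auto intro: finite_subset[of _ "V \<times> V"])
  moreover have "(s0, t0) \<in> ?E" using assms by auto
  ultimately obtain e where "is_arg_min (case_prod w) (\<lambda>e. e \<in> ?E) e"
    using ex_is_arg_min_if_finite[of ?E "case_prod w"] by blast
  then have "e \<in> ?E" "\<And>e'. e' \<in> ?E \<Longrightarrow> case_prod w e \<le> case_prod w e'"
    unfolding is_arg_min_def by (auto simp: not_less[symmetric])
  then show ?thesis using that by (cases e) auto
qed

lemma covers_cuts_terminal_exists:
  assumes "covers_cuts V T y" and "t0 \<in> V - T"
  shows "V - (V - T) \<noteq> {}"
proof
  assume empty: "V - (V - T) = {}"
  have "1 \<le> (\<Sum>t\<in>V - T. \<Sum>s\<in>V - (V - T). y (s, t))"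
    using assms(1)[unfolded covers_cuts_def, rule_format, of "V - T"] assms(2) by blast
  then show False unfolding empty by simp
qed

lemma lower_weights_sym_nonneg:
  assumes w: "\<forall>s\<in>V. \<forall>t\<in>V. s \<noteq> t \<longrightarrow> w s t = w t s \<and> 0 \<le> w s t"
    and min: "\<And>s t. s \<in> V \<Longrightarrow> t \<in> U \<Longrightarrow> s \<noteq> t \<Longrightarrow> lam \<le> w s t"
  shows "\<forall>s\<in>V. \<forall>t\<in>V. s \<noteq> t \<longrightarrow> lower_weights U lam w s t = lower_weights U lam w t s \<and> 0 \<le> lower_weights U lam w s t"
proof (intro ballI impI)
  fix s t assume st: "s \<in> V" "t \<in> V" "s \<noteq> t"
  have "w s t = w t s" "0 \<le> w s t" using w st by auto
  moreover have "lam \<le> w s t" if "s \<in> U \<or> t \<in> U"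
    using that min[of s t] min[of t s] st \<open>w s t = w t s\<close> by auto
  ultimately show "lower_weights U lam w s t = lower_weights U lam w t s \<and> 0 \<le> lower_weights U lam w s t"
    unfolding lower_weights_def by auto
qed

lemma parent_map_cost_le_in_cost:
  assumes "finite V" and "T \<subseteq> V" and "\<forall>s\<in>V. \<forall>t\<in>V. s \<noteq> t \<longrightarrow> w s t = w t s \<and> 0 \<le> w s t"
    and "\<forall>e. 0 \<le> y e" and "covers_cuts V T y"
  shows "\<exists>p h. parent_map V T p h \<and> (\<Sum>u\<in>V - T. w u (p u)) \<le> in_cost V (V - T) w y"
  using assms
proof (induction "card (V - T)" arbitrary: V w y)
  case 0
  then have "V - T = {}" by simp
  then have "parent_map V T id (\<lambda>_. 0)" unfolding parent_map_def by blast
  moreover have "(\<Sum>u\<in>V - T. w u (id u)) \<le> in_cost V (V - T) w y"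
    unfolding in_cost_def \<open>V - T = {}\<close> by simp
  ultimately show ?case by blast
next
  case (Suc n)
  note fin = Suc.prems(1) and T = Suc.prems(2) and w = Suc.prems(3) and y = Suc.prems(4)
    and cover = Suc.prems(5)
  obtain t0 where t0: "t0 \<in> V - T" using Suc.hyps(2) by (metis card.empty ex_in_conv nat.distinct(1))
  then obtain s0 where s0: "s0 \<in> V - (V - T)" using covers_cuts_terminal_exists[OF cover] by blast
  obtain a b where "a \<in> V" and b: "b \<in> V - T" and "a \<noteq> b"
    and min: "\<And>s t. s \<in> V \<Longrightarrow> t \<in> V - T \<Longrightarrow> s \<noteq> t \<Longrightarrow> w a b \<le> w s t"
    using min_weight_edge_exists[OF fin t0 s0 Diff_subset, where w = w] by blast
  note a = \<open>a \<in> V\<close> \<open>a \<noteq> b\<close>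
  define w' where "w' = lower_weights (V - T) (w a b) w"
  have w': "\<forall>s\<in>V. \<forall>t\<in>V. s \<noteq> t \<longrightarrow> w' s t = w' t s \<and> 0 \<le> w' s t"
    unfolding w'_def using lower_weights_sym_nonneg[OF w min] by blast
  have w'_ab: "w' a b = 0" "w' b a = 0"
    using w a b unfolding w'_def lower_weights_def by auto
  let ?w = "contract_weight a b w'" and ?y = "contract_flow a b y"
  have "\<exists>p h. parent_map (V - {b}) T p h \<and> (\<Sum>u\<in>V - {b} - T. ?w u (p u)) \<le> in_cost (V - {b}) (V - {b} - T) ?w ?y"
  proof (rule Suc.hyps(1))
    have "V - {b} - T = (V - T) - {b}" by blast
    then show "n = card (V - {b} - T)" using Suc.hyps(2) b fin by (simp add: card_Diff_singleton)
    show "\<forall>s\<in>V - {b}. \<forall>t\<in>V - {b}. s \<noteq> t \<longrightarrow> ?w s t = ?w t s \<and> 0 \<le> ?w s t"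
      using w' a b unfolding contract_weight_def by auto
    show "\<forall>e. 0 \<le> ?y e" using y unfolding contract_flow_def by auto
    show "covers_cuts (V - {b}) T ?y" using covers_cuts_contract[OF fin b a cover] .
    show "finite (V - {b})" using fin by blast
    show "T \<subseteq> V - {b}" using T b by blast
  qed
  then obtain p h where parent: "parent_map (V - {b}) T p h"
    and le: "(\<Sum>u\<in>V - {b} - T. ?w u (p u)) \<le> in_cost (V - {b}) (V - {b} - T) ?w ?y"
    by blast
  have "(\<Sum>u\<in>V - T. w' u (lift_parent T a b w' p u)) \<le> in_cost V (V - T) w' y"
    using lift_parent_cost_le_in_cost[OF fin b a y w' w'_ab parent le] .
  moreover have "0 \<le> w a b" using w a b by blast
  ultimately have "(\<Sum>u\<in>V - T. w u (lift_parent T a b w' p u)) \<le> in_cost V (V - T) w y"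
    using parent_cost_le_in_cost_lower_weights[OF fin _ cover] unfolding w'_def by blast
  then show ?case using parent_map_lift[OF b a parent] by blast
qed

lemma lp_feasible_nonneg:
  assumes "lp_feasible C R c k x z"
  shows "0 \<le> x r v e" and "0 \<le> z r v u"
proof -
  have "\<forall>r v e. x r v e \<ge> 0"
    using assms unfolding lp_feasible_def Let_def by (elim conjE) assumption
  then show "0 \<le> x r v e" by blast
  have "\<forall>r v u. z r v u \<ge> 0"
    using assms unfolding lp_feasible_def Let_def by (elim conjE) assumption
  then show "0 \<le> z r v u" by blast
qed

lemma lp_feasible_cut:
  assumes "lp_feasible C R c k x z" and "r \<in> R" and "v \<in> C" and "S \<subseteq> C \<union> R - {r}" and "u \<in> S"
  shows "z r v u \<le> (\<Sum>e\<in>delta_in (C \<union> R) S. x r v e)"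
proof -
  have "\<forall>r\<in>R. \<forall>v\<in>C. \<forall>S u. S \<subseteq> C \<union> R - {r} \<and> u \<in> S \<longrightarrow> (\<Sum>e\<in>delta_in (C \<union> R) S. x r v e) \<ge> z r v u"
    using assms(1) unfolding lp_feasible_def Let_def by (elim conjE) assumption
  then show ?thesis using assms(2-5) by blast
qed

lemma lp_feasible_demand:
  assumes "lp_feasible C R c k x z" and "u \<in> C"
  shows "(\<Sum>r\<in>R. \<Sum>v\<in>C. z r v u) = 1"
proof -
  have "\<forall>u\<in>C. (\<Sum>r\<in>R. \<Sum>v\<in>C. z r v u) = 1"
    using assms(1) unfolding lp_feasible_def Let_def by (elim conjE) assumption
  then show ?thesis using assms(2) by blast
qed

lemma metric_on_sym_nonneg:
  assumes "metric_on V c" and "a \<in> V" and "b \<in> V"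
  shows "c a b = c b a" and "0 \<le> c a b"
  using assms unfolding metric_on_def by blast+

lemma min_tforest_cost_le_in_cost:
  assumes "finite V" and "T \<subseteq> V" and "metric_on V c" and "\<forall>e. 0 \<le> y e" and "covers_cuts V T y"
  shows "min_tforest_cost V T c \<le> in_cost V (V - T) c y"
proof -
  have "\<forall>s\<in>V. \<forall>t\<in>V. s \<noteq> t \<longrightarrow> c s t = c t s \<and> 0 \<le> c s t"
    using metric_on_sym_nonneg[OF assms(3)] by blast
  then obtain p h where parent: "parent_map V T p h" and le: "(\<Sum>u\<in>V - T. c u (p u)) \<le> in_cost V (V - T) c y"
    using parent_map_cost_le_in_cost[OF assms(1,2) _ assms(4,5)] by blast
  have "\<forall>s\<in>V. \<forall>t\<in>V. c s t = c t s" using metric_on_sym_nonneg(1)[OF assms(3)] by blast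
  from min_tforest_cost_le_parent_cost[OF assms(1,2) parent this] le show ?thesis by linarith
qed

lemma sum_delta_in:
  assumes "S \<subseteq> V"
  shows "(\<Sum>e\<in>delta_in V S. f e) = (\<Sum>t\<in>S. \<Sum>s\<in>V - S. f (s, t))"
proof -
  have "delta_in V S = (V - S) \<times> S" using assms unfolding delta_in_def dedges_def by auto
  then have "(\<Sum>e\<in>delta_in V S. f e) = (\<Sum>s\<in>V - S. \<Sum>t\<in>S. f (s, t))"
    by (simp add: sum.cartesian_product)
  then show ?thesis by (simp add: sum.swap[of _ "V - S"])
qed

lemma sum_dedges:
  assumes "finite V"
  shows "(\<Sum>e\<in>dedges V. f e) = (\<Sum>t\<in>V. \<Sum>s\<in>V - {t}. f (s, t))"
proof -
  have "dedges V = (\<lambda>(t, s). (s, t)) ` (SIGMA t:V. V - {t})" unfolding dedges_def by auto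
  moreover have "inj_on (\<lambda>(t, s). (s, t)) (SIGMA t:V. V - {t})" by (auto simp: inj_on_def)
  ultimately show ?thesis using assms by (simp add: sum.reindex sum.Sigma case_prod_beta')
qed

definition total_flow :: "'a set \<Rightarrow> 'a set \<Rightarrow> ('a \<Rightarrow> 'a \<Rightarrow> 'a \<times> 'a \<Rightarrow> real) \<Rightarrow> 'a \<times> 'a \<Rightarrow> real" where
  "total_flow C R x e = (\<Sum>r\<in>R. \<Sum>v\<in>C. x r v e)"

lemma sum_total_flow:
  "(\<Sum>r\<in>R. \<Sum>v\<in>C. \<Sum>e\<in>E. g e * x r v e) = (\<Sum>e\<in>E. g e * total_flow C R x e)"
proof -
  have "(\<Sum>r\<in>R. \<Sum>v\<in>C. \<Sum>e\<in>E. g e * x r v e) = (\<Sum>r\<in>R. \<Sum>e\<in>E. \<Sum>v\<in>C. g e * x r v e)"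
    by (intro sum.cong refl sum.swap)
  also have "\<dots> = (\<Sum>e\<in>E. \<Sum>r\<in>R. \<Sum>v\<in>C. g e * x r v e)"
    by (rule sum.swap)
  finally show ?thesis by (simp add: total_flow_def sum_distrib_left)
qed

lemma lp_obj_eq_in_cost:
  assumes "finite C" and "finite R"
  shows "lp_obj C R c x = in_cost (C \<union> R) (C \<union> R) c (total_flow C R x)"
proof -
  have "lp_obj C R c x = (\<Sum>e\<in>dedges (C \<union> R). c (fst e) (snd e) * total_flow C R x e)"
    unfolding lp_obj_def by (rule sum_total_flow)
  also have "\<dots> = in_cost (C \<union> R) (C \<union> R) c (total_flow C R x)"
    unfolding in_cost_def using assms by (simp add: sum_dedges)
  finally show ?thesis .
qed

text \<open>Constraints (3) and (4): every client u sends one unit of demand, which crosses every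
  cut separating it from the depots.\<close>
lemma lp_feasible_covers_cuts:
  assumes "lp_feasible C R c k x z" and "finite C" and "finite R" and "C \<inter> R = {}"
    and "U \<subseteq> C"
  shows "covers_cuts (C \<union> R) (R \<union> (C - U)) (total_flow C R x)"
  unfolding covers_cuts_def
proof (intro allI impI)
  fix S assume S: "S \<subseteq> C \<union> R - (R \<union> (C - U))" "S \<noteq> {}"
  then obtain u where u: "u \<in> S" by blast
  have SC: "S \<subseteq> C" using S assms(5) by blast
  have "1 = (\<Sum>r\<in>R. \<Sum>v\<in>C. z r v u)" using lp_feasible_demand[OF assms(1)] u SC by auto
  also have "\<dots> \<le> (\<Sum>r\<in>R. \<Sum>v\<in>C. \<Sum>e\<in>delta_in (C \<union> R) S. x r v e)"
  proof (intro sum_mono)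
    fix r v assume "r \<in> R" "v \<in> C"
    moreover have "S \<subseteq> C \<union> R - {r}" using SC \<open>r \<in> R\<close> assms(4) by blast
    ultimately show "z r v u \<le> (\<Sum>e\<in>delta_in (C \<union> R) S. x r v e)" using lp_feasible_cut[OF assms(1)] u by blast
  qed
  also have "\<dots> = (\<Sum>e\<in>delta_in (C \<union> R) S. total_flow C R x e)"
    using sum_total_flow[of "\<lambda>_. 1"] by simp
  also have "\<dots> = (\<Sum>t\<in>S. \<Sum>s\<in>C \<union> R - S. total_flow C R x (s, t))"
    using SC by (intro sum_delta_in) blast
  finally show "1 \<le> (\<Sum>t\<in>S. \<Sum>s\<in>C \<union> R - S. total_flow C R x (s, t))" by simp
qed

lemma lp_feasible_total_flow_nonneg:
  assumes "lp_feasible C R c k x z"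
  shows "0 \<le> total_flow C R x e"
  unfolding total_flow_def using lp_feasible_nonneg(1)[OF assms] by (intro sum_nonneg)

lemma min_tforest_cost_le_unserved_in_cost:
  assumes "lp_feasible C R c k x z" and "finite C" and "finite R" and "C \<inter> R = {}"
    and "metric_on (C \<union> R) c"
  shows "min_tforest_cost (C \<union> R) (R \<union> (C - unserved C rho B J)) c
    \<le> in_cost (C \<union> R) (unserved C rho B J) c (total_flow C R x)"
proof -
  let ?U = "unserved C rho B J"
  have "?U \<subseteq> C" unfolding unserved_def by blast
  then have "C \<union> R - (R \<union> (C - ?U)) = ?U" using assms(4) by blast
  then show ?thesis
    using min_tforest_cost_le_in_cost[of "C \<union> R" "R \<union> (C - ?U)" c "total_flow C R x"]
      lp_feasible_covers_cuts[OF assms(1-4) \<open>?U \<subseteq> C\<close>] lp_feasible_total_flow_nonneg[OF assms(1)]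
      assms(2,3,5)
    by auto
qed

definition sample_prob :: "'i set \<Rightarrow> ('i \<Rightarrow> real) \<Rightarrow> 'i set \<Rightarrow> real" where
  "sample_prob I mu J = (\<Prod>i\<in>J. mu i) * (\<Prod>i\<in>I - J. 1 - mu i)"

lemma sample_prob_nonneg:
  assumes "\<forall>i\<in>I. 0 \<le> mu i \<and> mu i \<le> 1" and "J \<subseteq> I"
  shows "0 \<le> sample_prob I mu J"
  unfolding sample_prob_def using assms by (auto intro!: mult_nonneg_nonneg prod_nonneg)

lemma sum_sample_prob_avoiding:
  assumes "finite I"
  shows "(\<Sum>J\<in>Pow I. sample_prob I mu J * of_bool (J \<inter> A = {})) = (\<Prod>i\<in>I \<inter> A. 1 - mu i)"
proof -
  have "(\<Prod>i\<in>I \<inter> A. 1 - mu i) = (\<Prod>i\<in>I. if i \<in> A then 1 - mu i else 1)"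
    using prod.inter_filter[OF assms, of "\<lambda>i. 1 - mu i" "\<lambda>i. i \<in> A"] by (simp add: Int_def)
  also have "\<dots> = (\<Prod>i\<in>I. (if i \<in> A then 0 else mu i) + (1 - mu i))"
    by (intro prod.cong) auto
  also have "\<dots> = (\<Sum>J\<in>Pow I. (\<Prod>i\<in>J. if i \<in> A then 0 else mu i) * (\<Prod>i\<in>I - J. 1 - mu i))"
    by (rule prod_add[OF assms])
  also have "\<dots> = (\<Sum>J\<in>Pow I. sample_prob I mu J * of_bool (J \<inter> A = {}))"
  proof (intro sum.cong refl)
    fix J assume "J \<in> Pow I"
    then have "finite J" using assms finite_subset by blast
    then have "(\<Prod>i\<in>J. if i \<in> A then 0 else mu i) = (\<Prod>i\<in>J. mu i) * of_bool (J \<inter> A = {})"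
    proof (cases "J \<inter> A = {}")
      case True
      then have "(\<Prod>i\<in>J. if i \<in> A then 0 else mu i) = (\<Prod>i\<in>J. mu i)"
        by (intro prod.cong) auto
      then show ?thesis using True by simp
    next
      case False
      then show ?thesis using \<open>finite J\<close> by (auto intro: prod_zero)
    qed
    then show "(\<Prod>i\<in>J. if i \<in> A then 0 else mu i) * (\<Prod>i\<in>I - J. 1 - mu i) = sample_prob I mu J * of_bool (J \<inter> A = {})"
      unfolding sample_prob_def by simp
  qed
  finally show ?thesis by simp
qed

lemma prod_one_minus_le_exp:
  fixes m :: "'i \<Rightarrow> real"
  assumes "finite X" and "\<forall>i\<in>X. 0 \<le> m i \<and> m i \<le> 1"
  shows "(\<Prod>i\<in>X. 1 - m i) \<le> exp (- (\<Sum>i\<in>X. m i))"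
proof -
  have "(\<Prod>i\<in>X. 1 - m i) \<le> (\<Prod>i\<in>X. exp (- m i))"
  proof (rule prod_mono)
    fix i assume "i \<in> X"
    then show "0 \<le> 1 - m i \<and> 1 - m i \<le> exp (- m i)"
      using assms(2) exp_ge_add_one_self[of "- m i"] by simp
  qed
  also have "\<dots> = exp (- (\<Sum>i\<in>X. m i))"
    using assms(1) by (simp add: exp_sum sum_negf[symmetric])
  finally show ?thesis .
qed

lemma unserved_prob_le_exp:
  assumes "finite I" and "\<forall>i\<in>I. 0 \<le> mu i \<and> mu i \<le> 1" and "t \<in> C"
    and "\<gamma> \<le> (\<Sum>i\<in>{i\<in>I. t \<in> bverts (rho i) (B i)}. mu i)"
  shows "(\<Sum>J\<in>Pow I. sample_prob I mu J * of_bool (t \<in> unserved C rho B J)) \<le> exp (- \<gamma>)"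
proof -
  let ?A = "{i. t \<in> bverts (rho i) (B i)}"
  have "(\<Sum>J\<in>Pow I. sample_prob I mu J * of_bool (t \<in> unserved C rho B J))
      = (\<Sum>J\<in>Pow I. sample_prob I mu J * of_bool (J \<inter> ?A = {}))"
    using assms(3) unfolding unserved_def by (intro sum.cong refl) auto
  also have "\<dots> = (\<Prod>i\<in>I \<inter> ?A. 1 - mu i)" by (rule sum_sample_prob_avoiding[OF assms(1)])
  also have "\<dots> \<le> exp (- (\<Sum>i\<in>I \<inter> ?A. mu i))"
    using assms(1,2) by (intro prod_one_minus_le_exp) auto
  also have "\<dots> \<le> exp (- \<gamma>)"
    using assms(4) by (simp add: Int_def)
  finally show ?thesis .
qed

lemma lp_feasible_z_le_one:
  assumes "lp_feasible C R c k x z" and "finite C" and "finite R" and "r \<in> R" and "v \<in> C" and "u \<in> C"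
  shows "z r v u \<le> 1"
proof -
  have "z r v u \<le> (\<Sum>v'\<in>C. z r v' u)"
    using assms(2,5) lp_feasible_nonneg(2)[OF assms(1)] by (intro member_le_sum) auto
  also have "\<dots> \<le> (\<Sum>r'\<in>R. \<Sum>v'\<in>C. z r' v' u)"
    using assms(3,4) lp_feasible_nonneg(2)[OF assms(1)]
    by (intro member_le_sum[where f = "\<lambda>r'. \<Sum>v'\<in>C. z r' v' u"]) (auto intro: sum_nonneg)
  also have "\<dots> = 1" using lp_feasible_demand[OF assms(1,6)] .
  finally show ?thesis .
qed

lemma sum_group_by_root_and_client:
  assumes "finite X" and "finite R" and "finite C" and "\<forall>i\<in>X. rho i \<in> R \<and> sigma i \<in> C"
  shows "(\<Sum>r\<in>R. \<Sum>v\<in>C. \<Sum>i\<in>{i\<in>X. rho i = r \<and> sigma i = v}. f i) = (\<Sum>i\<in>X. f i)"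
proof -
  have "(\<Sum>r\<in>R. \<Sum>v\<in>C. \<Sum>i\<in>{i\<in>X. rho i = r \<and> sigma i = v}. f i)
      = (\<Sum>(r, v)\<in>R \<times> C. \<Sum>i\<in>{i\<in>X. rho i = r \<and> sigma i = v}. f i)"
    by (rule sum.cartesian_product)
  also have "\<dots> = (\<Sum>p\<in>R \<times> C. \<Sum>i\<in>{i\<in>X. (rho i, sigma i) = p}. f i)"
    by (intro sum.cong) auto
  also have "\<dots> = (\<Sum>i\<in>X. f i)"
    using assms by (intro sum.group) auto
  finally show ?thesis .
qed

lemma sample_weight_le_one:
  assumes "lp_feasible C R c k x z" and "finite C" and "finite R" and "finite I" and "\<gamma> \<le> 1/2"
    and "\<forall>i\<in>I. rho i \<in> R \<and> sigma i \<in> C \<and> mu i \<ge> 0"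
    and "\<forall>r\<in>R. \<forall>v\<in>C. (\<Sum>i\<in>{i\<in>I. rho i = r \<and> sigma i = v}. mu i) = 2 * \<gamma> * z r v v"
    and "i \<in> I"
  shows "mu i \<le> 1"
proof -
  have root: "rho i \<in> R" and client: "sigma i \<in> C" using assms(6,8) by auto
  have "mu i \<le> (\<Sum>j\<in>{j\<in>I. rho j = rho i \<and> sigma j = sigma i}. mu j)"
    using assms(4,6,8) by (intro member_le_sum) auto
  also have "\<dots> = 2 * \<gamma> * z (rho i) (sigma i) (sigma i)" using assms(7) root client by blast
  also have "\<dots> \<le> z (rho i) (sigma i) (sigma i)"
    using assms(5) mult_right_mono[of "2 * \<gamma>" 1, OF _ lp_feasible_nonneg(2)[OF assms(1)]] by simp
  also have "\<dots> \<le> 1" using lp_feasible_z_le_one[OF assms(1-3) root client client] .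
  finally show ?thesis .
qed

text \<open>By constraint (4) the weights z r v t sum to 1. The branchings of (r, t) all contain t
  and weigh 2 \<gamma> z r t t; those of (r, v) with v \<noteq> t contain t with weight at least \<gamma> z r v t.\<close>
lemma covering_weight_ge:
  assumes "lp_feasible C R c k x z" and "finite C" and "finite R" and "finite I" and "0 \<le> \<gamma>"
    and "\<forall>i\<in>I. rho i \<in> R \<and> sigma i \<in> C \<and> sigma i \<in> bverts (rho i) (B i)"
    and "\<forall>r\<in>R. \<forall>v\<in>C. (\<Sum>i\<in>{i\<in>I. rho i = r \<and> sigma i = v}. mu i) = 2 * \<gamma> * z r v v"
    and "\<forall>r\<in>R. \<forall>v\<in>C. \<forall>u\<in>C. u \<noteq> v \<longrightarrow>
           (\<Sum>i\<in>{i\<in>I. rho i = r \<and> sigma i = v \<and> u \<in> bverts (rho i) (B i)}. mu i) \<ge> \<gamma> * z r v u"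
    and "t \<in> C"
  shows "\<gamma> \<le> (\<Sum>i\<in>{i\<in>I. t \<in> bverts (rho i) (B i)}. mu i)"
proof -
  let ?X = "{i\<in>I. t \<in> bverts (rho i) (B i)}"
  have "\<gamma> = (\<Sum>r\<in>R. \<Sum>v\<in>C. \<gamma> * z r v t)"
    using lp_feasible_demand[OF assms(1,9)] by (simp add: sum_distrib_left[symmetric])
  also have "\<dots> \<le> (\<Sum>r\<in>R. \<Sum>v\<in>C. \<Sum>i\<in>{i\<in>?X. rho i = r \<and> sigma i = v}. mu i)"
  proof (intro sum_mono)
    fix r v assume r: "r \<in> R" and v: "v \<in> C"
    show "\<gamma> * z r v t \<le> (\<Sum>i\<in>{i\<in>?X. rho i = r \<and> sigma i = v}. mu i)"
    proof (cases "v = t")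
      case True
      then have "{i\<in>?X. rho i = r \<and> sigma i = v} = {i\<in>I. rho i = r \<and> sigma i = v}"
        using assms(6) by auto
      moreover have "\<gamma> * z r v t \<le> 2 * \<gamma> * z r v v"
        using True assms(5) lp_feasible_nonneg(2)[OF assms(1)] by (simp add: mult_right_mono)
      ultimately show ?thesis using assms(7) r v by auto
    next
      case False
      have "{i\<in>?X. rho i = r \<and> sigma i = v} = {i\<in>I. rho i = r \<and> sigma i = v \<and> t \<in> bverts (rho i) (B i)}"
        by auto
      then show ?thesis using assms(8,9) r v False by auto
    qed
  qed
  also have "\<dots> = (\<Sum>i\<in>?X. mu i)"
    using assms(2-4,6) by (intro sum_group_by_root_and_client) auto
  finally show ?thesis .
qed

lemma expected_forest_cost_le:
  assumes feasible: "lp_feasible C R c k x z" and "finite C" and "finite R" and "C \<inter> R = {}"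
    and "metric_on (C \<union> R) c" and "\<forall>i\<in>I. 0 \<le> mu i \<and> mu i \<le> 1" and "0 \<le> q"
    and unserved: "\<forall>t\<in>C. (\<Sum>J\<in>Pow I. sample_prob I mu J * of_bool (t \<in> unserved C rho B J)) \<le> q"
  shows "expected_forest_cost C R c I rho B mu \<le> q * lp_obj C R c x"
proof -
  let ?V = "C \<union> R" and ?P = "sample_prob I mu" and ?U = "unserved C rho B" and ?y = "total_flow C R x"
  let ?K = "\<lambda>t. in_cost ?V {t} c ?y"
  have "finite ?V" using assms(2,3) by blast
  have unserved_sub: "?U J \<subseteq> ?V" for J unfolding unserved_def by blast
  have "expected_forest_cost C R c I rho B mu = (\<Sum>J\<in>Pow I. ?P J * min_tforest_cost ?V (R \<union> (C - ?U J)) c)"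
    unfolding expected_forest_cost_def sample_prob_def ..
  also have "\<dots> \<le> (\<Sum>J\<in>Pow I. ?P J * (\<Sum>t\<in>?V. ?K t * of_bool (t \<in> ?U J)))"
    using min_tforest_cost_le_unserved_in_cost[OF feasible assms(2-5), of rho B] sample_prob_nonneg[OF assms(6)]
    unfolding in_cost_eq_sum_indicator[OF \<open>finite ?V\<close> unserved_sub]
    by (intro sum_mono mult_left_mono) auto
  also have "\<dots> = (\<Sum>J\<in>Pow I. \<Sum>t\<in>?V. ?K t * (?P J * of_bool (t \<in> ?U J)))"
    by (simp add: sum_distrib_left mult.left_commute)
  also have "\<dots> = (\<Sum>t\<in>?V. ?K t * (\<Sum>J\<in>Pow I. ?P J * of_bool (t \<in> ?U J)))"
    by (subst sum.swap) (simp add: sum_distrib_left)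
  also have "\<dots> \<le> (\<Sum>t\<in>?V. ?K t * q)"
  proof (intro sum_mono mult_left_mono)
    fix t assume "t \<in> ?V"
    then show "0 \<le> ?K t"
      using metric_on_sym_nonneg(2)[OF assms(5)] lp_feasible_total_flow_nonneg[OF feasible]
      by (intro in_cost_nonneg) auto
    show "(\<Sum>J\<in>Pow I. ?P J * of_bool (t \<in> ?U J)) \<le> q"
    proof (cases "t \<in> C")
      case False
      then show ?thesis using \<open>0 \<le> q\<close> unfolding unserved_def by simp
    qed (use unserved in blast)
  qed
  also have "\<dots> = q * lp_obj C R c x"
    unfolding lp_obj_eq_in_cost[OF assms(2,3)] in_cost_eq_sum_indicator[OF \<open>finite ?V\<close> order_refl]
    by (simp add: sum_distrib_left mult.commute)
  finally show ?thesis .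
qed

text \<open>Only feasibility of (x, z) is used, not its optimality or extremality; neither are k \<ge> 3,
  the positivity of c (v, R), the edge bounds of the decomposition, nor that the B i are
  branchings.\<close>
theorem lemma5:
  fixes C R :: "'a set" and c :: "'a \<Rightarrow> 'a \<Rightarrow> real" and k :: nat and \<gamma> :: real
    and x :: "'a \<Rightarrow> 'a \<Rightarrow> 'a \<times> 'a \<Rightarrow> real" and z :: "'a \<Rightarrow> 'a \<Rightarrow> 'a \<Rightarrow> real"
    and I :: "'i set" and rho sigma :: "'i \<Rightarrow> 'a" and B :: "'i \<Rightarrow> ('a \<times> 'a) set"
    and mu :: "'i \<Rightarrow> real"
  assumes "finite C" and "finite R" and "C \<noteq> {}" and "R \<noteq> {}" and "C \<inter> R = {}"
    and "metric_on (C \<union> R) c"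
    and "k \<ge> 3"
    and "\<forall>v\<in>C. Min (c v ` R) > 0"
    and "0 < \<gamma>" and "\<gamma> \<le> 1/2"
    and "lp_extreme C R c k x z" and "lp_optimal C R c k x z"
    and "finite I"
    and "\<forall>i\<in>I. rho i \<in> R \<and> sigma i \<in> C \<and> is_branching (C \<union> R) (rho i) (B i) \<and>
                mu i \<ge> 0 \<and> sigma i \<in> bverts (rho i) (B i)"
    and "\<forall>r\<in>R. \<forall>v\<in>C. (\<Sum>i\<in>{i\<in>I. rho i = r \<and> sigma i = v}. mu i) = 2 * \<gamma> * z r v v"
    and "\<forall>r\<in>R. \<forall>v\<in>C. \<forall>e\<in>dedges (C \<union> R).
           (\<Sum>i\<in>{i\<in>I. rho i = r \<and> sigma i = v \<and> e \<in> B i}. mu i) \<le> \<gamma> * x r v e"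
    and "\<forall>r\<in>R. \<forall>v\<in>C. \<forall>u\<in>C. u \<noteq> v \<longrightarrow>
           (\<Sum>i\<in>{i\<in>I. rho i = r \<and> sigma i = v \<and> u \<in> bverts (rho i) (B i)}. mu i) \<ge> \<gamma> * z r v u"
  shows "expected_forest_cost C R c I rho B mu \<le> exp (- \<gamma>) * lp_obj C R c x"
proof -
  have feasible: "lp_feasible C R c k x z" using assms(12) unfolding lp_optimal_def by blast
  have weights: "\<forall>i\<in>I. 0 \<le> mu i \<and> mu i \<le> 1"
    using sample_weight_le_one[OF feasible assms(1,2,13,10) _ assms(15)] assms(14) by blast
  have "\<forall>t\<in>C. (\<Sum>J\<in>Pow I. sample_prob I mu J * of_bool (t \<in> unserved C rho B J)) \<le> exp (- \<gamma>)"
  proof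
    fix t assume t: "t \<in> C"
    have "\<gamma> \<le> (\<Sum>i\<in>{i\<in>I. t \<in> bverts (rho i) (B i)}. mu i)"
      using covering_weight_ge[OF feasible assms(1,2,13) _ _ assms(15,17) t] assms(9,14) by auto
    then show "(\<Sum>J\<in>Pow I. sample_prob I mu J * of_bool (t \<in> unserved C rho B J)) \<le> exp (- \<gamma>)"
      by (rule unserved_prob_le_exp[OF assms(13) weights t])
  qed
  then show ?thesis
    using expected_forest_cost_le[OF feasible assms(1,2,5,6) weights] by simp
qed

end
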